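(* Let $M$ be a strong module of a dually-CPT poset $\mathbf{P}=(X,P)$. If $M$ is one-sided in some CPT representation of $\mathbf{P}$ and the subposet induced by $M$ has connected comparability graph, then $M$ is a clique module.
   Context: A CPT representation of $\mathbf{P}$ assigns to each $x\in X$ a path $W_x$ of a host tree $T$ with $x<y$ iff $W_x\subsetneq W_y$; $\mathbf{P}$ is dually-CPT if $\mathbf{P}$ and its dual both have such representations. A module is a set $M\subseteq X$ such that each $y\notin M$ is comparable to all or none of the elements of $M$; it is strong if for every module $M'$, $M\cap M'=\emptyset$, $M\subseteq M'$ or $M'\subseteq M$. A strong module is a clique module if the complement of its induced comparability graph is disconnected. In a CPT representation, a set of elements is one-sided if all their paths arrive at (have an endpoint at) a common vertex $a$ of $T$ and all of these paths, except possibly one trivial (single-vertex) path, pass through a common neighbour $b$ of $a$ in $T$. *)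

theory Defs
  imports Main
begin

definition graph_on :: "'v set \<Rightarrow> ('v \<Rightarrow> 'v \<Rightarrow> bool) \<Rightarrow> bool" where
  "graph_on V E \<longleftrightarrow> (\<forall>u v. E u v \<longrightarrow> u \<in> V \<and> v \<in> V) \<and>
     (\<forall>u v. E u v \<longrightarrow> E v u) \<and> (\<forall>u. \<not> E u u)"

definition is_path :: "'v set \<Rightarrow> ('v \<Rightarrow> 'v \<Rightarrow> bool) \<Rightarrow> 'v list \<Rightarrow> bool" where
  "is_path V E p \<longleftrightarrow> p \<noteq> [] \<and> distinct p \<and> set p \<subseteq> V \<and>
     (\<forall>i. Suc i < length p \<longrightarrow> E (p ! i) (p ! Suc i))"

definition is_cycle :: "'v set \<Rightarrow> ('v \<Rightarrow> 'v \<Rightarrow> bool) \<Rightarrow> 'v list \<Rightarrow> bool" where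
  "is_cycle V E c \<longleftrightarrow> is_path V E c \<and> length c \<ge> 3 \<and> E (last c) (hd c)"

definition is_tree :: "'v set \<Rightarrow> ('v \<Rightarrow> 'v \<Rightarrow> bool) \<Rightarrow> bool" where
  "is_tree V E \<longleftrightarrow> finite V \<and> V \<noteq> {} \<and> graph_on V E \<and>
     (\<forall>u\<in>V. \<forall>v\<in>V. \<exists>p. is_path V E p \<and> hd p = u \<and> last p = v) \<and>
     (\<nexists>c. is_cycle V E c)"

definition strict_poset :: "'a set \<Rightarrow> ('a \<Rightarrow> 'a \<Rightarrow> bool) \<Rightarrow> bool" where
  "strict_poset X P \<longleftrightarrow> finite X \<and> (\<forall>x\<in>X. \<not> P x x) \<and>
     (\<forall>x\<in>X. \<forall>y\<in>X. \<forall>z\<in>X. P x y \<longrightarrow> P y z \<longrightarrow> P x z)"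

definition dual_rel :: "('a \<Rightarrow> 'a \<Rightarrow> bool) \<Rightarrow> 'a \<Rightarrow> 'a \<Rightarrow> bool" where
  "dual_rel P x y \<longleftrightarrow> P y x"

definition comparable :: "('a \<Rightarrow> 'a \<Rightarrow> bool) \<Rightarrow> 'a \<Rightarrow> 'a \<Rightarrow> bool" where
  "comparable P x y \<longleftrightarrow> x \<noteq> y \<and> (P x y \<or> P y x)"

definition CPT_rep :: "'a set \<Rightarrow> ('a \<Rightarrow> 'a \<Rightarrow> bool) \<Rightarrow> 'v set \<Rightarrow> ('v \<Rightarrow> 'v \<Rightarrow> bool)
    \<Rightarrow> ('a \<Rightarrow> 'v list) \<Rightarrow> bool" where
  "CPT_rep X P V E W \<longleftrightarrow> is_tree V E \<and> (\<forall>x\<in>X. is_path V E (W x)) \<and>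
     (\<forall>x\<in>X. \<forall>y\<in>X. P x y \<longleftrightarrow> set (W x) \<subset> set (W y))"

text \<open>Host trees are finite, so their vertices may be taken to be naturals.\<close>
definition is_CPT :: "'a set \<Rightarrow> ('a \<Rightarrow> 'a \<Rightarrow> bool) \<Rightarrow> bool" where
  "is_CPT X P \<longleftrightarrow> (\<exists>(V::nat set) E W. CPT_rep X P V E W)"

definition dually_CPT :: "'a set \<Rightarrow> ('a \<Rightarrow> 'a \<Rightarrow> bool) \<Rightarrow> bool" where
  "dually_CPT X P \<longleftrightarrow> is_CPT X P \<and> is_CPT X (dual_rel P)"

definition one_sided :: "'v set \<Rightarrow> ('v \<Rightarrow> 'v \<Rightarrow> bool) \<Rightarrow> ('a \<Rightarrow> 'v list) \<Rightarrow> 'a set \<Rightarrow> bool" where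
  "one_sided V E W M \<longleftrightarrow> (\<exists>a b. a \<in> V \<and> b \<in> V \<and> E a b \<and>
     (\<forall>x\<in>M. hd (W x) = a \<or> last (W x) = a) \<and>
     (\<forall>x\<in>M. b \<notin> set (W x) \<longrightarrow> length (W x) = 1) \<and>
     (\<forall>x\<in>M. \<forall>y\<in>M. b \<notin> set (W x) \<longrightarrow> b \<notin> set (W y) \<longrightarrow> x = y))"

definition is_module :: "'a set \<Rightarrow> ('a \<Rightarrow> 'a \<Rightarrow> bool) \<Rightarrow> 'a set \<Rightarrow> bool" where
  "is_module X P M \<longleftrightarrow> M \<subseteq> X \<and>
     (\<forall>y\<in>X - M. (\<forall>m\<in>M. comparable P y m) \<or> (\<forall>m\<in>M. \<not> comparable P y m))"

definition strong_module :: "'a set \<Rightarrow> ('a \<Rightarrow> 'a \<Rightarrow> bool) \<Rightarrow> 'a set \<Rightarrow> bool" where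
  "strong_module X P M \<longleftrightarrow> is_module X P M \<and>
     (\<forall>M'. is_module X P M' \<longrightarrow> M \<inter> M' = {} \<or> M \<subseteq> M' \<or> M' \<subseteq> M)"

definition connected_on :: "'a set \<Rightarrow> ('a \<Rightarrow> 'a \<Rightarrow> bool) \<Rightarrow> bool" where
  "connected_on S R \<longleftrightarrow> (\<forall>A B. A \<union> B = S \<longrightarrow> A \<inter> B = {} \<longrightarrow> A \<noteq> {} \<longrightarrow> B \<noteq> {} \<longrightarrow>
     (\<exists>a\<in>A. \<exists>b\<in>B. R a b))"

definition incomparable :: "('a \<Rightarrow> 'a \<Rightarrow> bool) \<Rightarrow> 'a \<Rightarrow> 'a \<Rightarrow> bool" where
  "incomparable P x y \<longleftrightarrow> x \<noteq> y \<and> \<not> comparable P x y"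

definition clique_module :: "'a set \<Rightarrow> ('a \<Rightarrow> 'a \<Rightarrow> bool) \<Rightarrow> 'a set \<Rightarrow> bool" where
  "clique_module X P M \<longleftrightarrow> strong_module X P M \<and> \<not> connected_on M (incomparable P)"

end

theory Submission
  imports Defs
begin

text \<open>
  In a tree, two paths that start at the same vertex and one of which lies inside the other
  form a prefix of one another, since a tree path has no chords. Hence the paths of M, which
  all arrive at a common vertex, are nested as soon as they lie in a common path. Moving
  along comparabilities in M this shows that a shortest path of M is contained in every path
  of M. The elements of M carrying that shortest path are then below all other elements of M,
  and since some two elements of M are comparable, these other elements form a nonempty set;
  so the incomparability graph of M is disconnected.
\<close>

lemma is_tree_graph_on: "is_tree V E \<Longrightarrow> graph_on V E"
  unfolding is_tree_def by simp

lemma is_path_rev: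
  assumes "graph_on V E" "is_path V E p"
  shows "is_path V E (rev p)"
proof -
  have "E (rev p ! i) (rev p ! Suc i)" if "Suc i < length p" for i
  proof -
    have "E (p ! (length p - Suc (Suc i))) (p ! Suc (length p - Suc (Suc i)))"
      using assms(2) that unfolding is_path_def by simp
    moreover have "Suc (length p - Suc (Suc i)) = length p - Suc i" using that by simp
    ultimately show ?thesis using assms(1) that unfolding graph_on_def by (simp add: rev_nth)
  qed
  then show ?thesis using assms(2) unfolding is_path_def by auto
qed

lemma is_path_arriving_reorient:
  assumes "graph_on V E" "is_path V E p" "hd p = a \<or> last p = a"
  obtains p' where "is_path V E p'" "hd p' = a" "set p' = set p"
proof (cases "hd p = a")
  case False
  then have "hd (rev p) = a" using assms(2,3) unfolding is_path_def by (simp add: hd_rev)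
  then show ?thesis using that is_path_rev[OF assms(1,2)] by simp
qed (use assms that in blast)

text \<open>Otherwise the segment of p between positions i and j, closed by the chord, is a cycle.\<close>
lemma tree_path_no_chord:
  assumes "is_tree V E" "is_path V E p" "i < j" "j < length p" "E (p ! i) (p ! j)"
  shows "j = Suc i"
proof (rule ccontr)
  assume "j \<noteq> Suc i"
  define c where "c = take (j - i + 1) (drop i p)"
  have len: "length c = j - i + 1" using assms(3,4) unfolding c_def by simp
  have c_nth: "c ! k = p ! (i + k)" if "k \<le> j - i" for k
    using that assms(3,4) unfolding c_def by simp
  have "is_path V E c"
    unfolding is_path_def
  proof (intro conjI allI impI)
    show "c \<noteq> []" "distinct c" "set c \<subseteq> V"
      using len assms(2) unfolding c_def is_path_def
      by (auto dest: in_set_takeD in_set_dropD)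
    fix k assume k: "Suc k < length c"
    have "E (p ! (i + k)) (p ! Suc (i + k))"
      using assms(2,4) k len unfolding is_path_def by simp
    then show "E (c ! k) (c ! Suc k)" using k len c_nth[of k] c_nth[of "Suc k"] by simp
  qed
  moreover have "c \<noteq> []" using len by auto
  then have "hd c = p ! i" "last c = p ! j"
    using c_nth[of 0] c_nth[of "j - i"] len assms(3) by (simp_all add: hd_conv_nth last_conv_nth)
  moreover have "E (p ! j) (p ! i)"
    using is_tree_graph_on[OF assms(1)] assms(5) unfolding graph_on_def by blast
  ultimately have "is_cycle V E c"
    using len \<open>j \<noteq> Suc i\<close> assms(3) unfolding is_cycle_def by simp
  then show False using assms(1) unfolding is_tree_def by blast
qed

lemma tree_path_prefix:
  assumes "is_tree V E" "is_path V E p" "is_path V E q" "set q \<subseteq> set p" "hd q = hd p"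
  shows "q = take (length q) p"
proof -
  have agree: "k < length p \<and> q ! k = p ! k" if "k < length q" for k
    using that
  proof (induction k rule: less_induct)
    case (less k)
    show ?case
    proof (cases k)
      case 0
      then show ?thesis using assms(2,3,5) unfolding is_path_def by (simp add: hd_conv_nth)
    next
      case (Suc m)
      have IH: "m < length p" "q ! m = p ! m" using less Suc by auto
      have dq: "distinct q" using assms(3) unfolding is_path_def by simp
      obtain j where j: "j < length p" "p ! j = q ! k"
        using assms(4) less.prems by (metis in_set_conv_nth subsetD nth_mem)
      have "E (q ! m) (q ! k)" using assms(3) less.prems Suc unfolding is_path_def by simp
      then have edge: "E (p ! m) (p ! j)" using IH j by simp
      have "j \<noteq> m" using dq less.prems Suc IH j by (auto simp: nth_eq_iff_index_eq)
      consider "m < j" | "j < m" using \<open>j \<noteq> m\<close> by linarith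
      then show ?thesis
      proof cases
        case 1
        then show ?thesis using tree_path_no_chord[OF assms(1,2) 1 j(1) edge] j Suc by simp
      next
        case 2
        have "E (p ! j) (p ! m)"
          using edge is_tree_graph_on[OF assms(1)] unfolding graph_on_def by blast
        then have "m = Suc j" using tree_path_no_chord[OF assms(1,2) 2 IH(1)] by simp
        then have "q ! j = q ! k" using less.IH[of j] less.prems j Suc by simp
        then show ?thesis using dq less.prems Suc \<open>m = Suc j\<close> by (simp add: nth_eq_iff_index_eq)
      qed
    qed
  qed
  then have "length q \<le> length p" by (metis leI less_irrefl)
  then show ?thesis using agree by (intro nth_equalityI) auto
qed

lemma tree_paths_arriving_nested:
  assumes "is_tree V E" "is_path V E p" "is_path V E q" "is_path V E s"
    "hd q = a \<or> last q = a" "hd s = a \<or> last s = a" "hd p = a \<or> last p = a"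
    "set q \<subseteq> set p" "set s \<subseteq> set p"
  shows "set q \<subseteq> set s \<or> set s \<subseteq> set q"
proof -
  note graph = is_tree_graph_on[OF assms(1)]
  obtain p' where p': "is_path V E p'" "hd p' = a" "set p' = set p"
    using is_path_arriving_reorient[OF graph assms(2,7)] .
  obtain q' where q': "is_path V E q'" "hd q' = a" "set q' = set q"
    using is_path_arriving_reorient[OF graph assms(3,5)] .
  obtain s' where s': "is_path V E s'" "hd s' = a" "set s' = set s"
    using is_path_arriving_reorient[OF graph assms(4,6)] .
  have "q' = take (length q') p'" "s' = take (length s') p'"
    using tree_path_prefix[OF assms(1) p'(1) q'(1)] tree_path_prefix[OF assms(1) p'(1) s'(1)]
      p' q' s' assms(8,9) by auto
  then show ?thesis
    using q'(3) s'(3) set_take_subset_set_take[of "length q'" "length s'" p']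
      set_take_subset_set_take[of "length s'" "length q'" p']
    by (cases "length q' \<le> length s'") auto
qed

lemma connected_on_closed_subset:
  assumes "connected_on M R" "A \<subseteq> M" "A \<noteq> {}" "\<And>x y. x \<in> A \<Longrightarrow> y \<in> M \<Longrightarrow> R x y \<Longrightarrow> y \<in> A"
  shows "A = M"
proof (rule ccontr)
  assume "A \<noteq> M"
  then have "A \<union> (M - A) = M" "A \<inter> (M - A) = {}" "M - A \<noteq> {}" using assms(2) by auto
  then obtain x y where "x \<in> A" "y \<in> M - A" "R x y"
    using assms(1,3) unfolding connected_on_def by meson
  then show False using assms(4) by blast
qed

lemma connected_on_edgeE:
  assumes "connected_on M R" "x \<in> M" "y \<in> M" "x \<noteq> y"
  obtains u v where "u \<in> M" "v \<in> M" "R u v"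
proof -
  have "{x} \<union> (M - {x}) = M" "{x} \<inter> (M - {x}) = {}" "M - {x} \<noteq> {}" using assms(2-4) by auto
  then have "\<exists>u\<in>{x}. \<exists>v\<in>M - {x}. R u v"
    using assms(1)[unfolded connected_on_def, rule_format, of "{x}" "M - {x}"] by blast
  then show ?thesis using assms(2) that by blast
qed

lemma CPT_arriving_paths_have_least:
  assumes "CPT_rep X P V E W" "M \<subseteq> X" "r0 \<in> M"
    "\<And>x. x \<in> M \<Longrightarrow> hd (W x) = a \<or> last (W x) = a"
    "connected_on M (comparable P)"
  obtains r where "r \<in> M" "\<And>x. x \<in> M \<Longrightarrow> set (W r) \<subseteq> set (W x)"
proof -
  have tree: "is_tree V E" and paths: "\<And>x. x \<in> M \<Longrightarrow> is_path V E (W x)"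
    and order: "\<And>x y. x \<in> M \<Longrightarrow> y \<in> M \<Longrightarrow> P x y \<longleftrightarrow> set (W x) \<subset> set (W y)"
    using assms(1,2) unfolding CPT_rep_def by (simp_all add: subset_iff)
  obtain r where r: "r \<in> M" "\<And>y. y \<in> M \<Longrightarrow> card (set (W r)) \<le> card (set (W y))"
    using ex_has_least_nat[of "\<lambda>x. x \<in> M" r0 "\<lambda>x. card (set (W x))"] assms(3) by blast
  define S where "S = {x \<in> M. set (W r) \<subseteq> set (W x)}"
  have "S = M"
  proof (rule connected_on_closed_subset[OF assms(5)])
    show "S \<subseteq> M" "S \<noteq> {}" using r(1) unfolding S_def by auto
    fix x y assume "x \<in> S" "y \<in> M" "comparable P x y"
    then have x: "x \<in> M" "set (W r) \<subseteq> set (W x)" and "P x y \<or> P y x"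
      unfolding S_def comparable_def by auto
    then consider "set (W x) \<subset> set (W y)" | "set (W y) \<subset> set (W x)"
      using order \<open>y \<in> M\<close> by blast
    then have "set (W r) \<subseteq> set (W y)"
    proof cases
      case 1
      then show ?thesis using x(2) by simp
    next
      case 2
      have "set (W r) \<subseteq> set (W y) \<or> set (W y) \<subseteq> set (W r)"
        using tree_paths_arriving_nested[OF tree paths[OF x(1)] paths[OF r(1)] paths[OF \<open>y \<in> M\<close>]
            assms(4)[OF r(1)] assms(4)[OF \<open>y \<in> M\<close>] assms(4)[OF x(1)] x(2) psubset_imp_subset[OF 2]] .
      then show ?thesis
        using card_seteq[OF finite_set _ r(2)[OF \<open>y \<in> M\<close>]] by blast
    qed
    then show "y \<in> S" using \<open>y \<in> M\<close> unfolding S_def by simp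
  qed
  then show ?thesis using that r(1) unfolding S_def by blast
qed

lemma least_set_disconnects_incomparable:
  assumes "\<And>x y. x \<in> M \<Longrightarrow> y \<in> M \<Longrightarrow> P x y \<longleftrightarrow> f x \<subset> f y"
    "r \<in> M" "\<And>x. x \<in> M \<Longrightarrow> f r \<subseteq> f x"
    "u \<in> M" "v \<in> M" "comparable P u v"
  shows "\<not> connected_on M (incomparable P)"
proof
  define R where "R = {x \<in> M. f x = f r}"
  have "f u \<noteq> f v" using assms(1,4-6) unfolding comparable_def by auto
  then have "M - R \<noteq> {}" using assms(4,5) unfolding R_def by auto
  moreover have "R \<noteq> {}" "R \<union> (M - R) = M" "R \<inter> (M - R) = {}" using assms(2) unfolding R_def by auto
  moreover assume "connected_on M (incomparable P)"
  ultimately obtain x y where xy: "x \<in> R" "y \<in> M - R" "incomparable P x y"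
    unfolding connected_on_def by meson
  then have "f x \<subset> f y" using assms(3) unfolding R_def by auto
  then have "P x y" using assms(1) xy(1,2) unfolding R_def by blast
  then show False using xy(3) unfolding incomparable_def comparable_def by blast
qed

theorem mainTheorem9:
  fixes X :: "'a set" and P :: "'a \<Rightarrow> 'a \<Rightarrow> bool" and M :: "'a set"
    and V :: "'v set" and E :: "'v \<Rightarrow> 'v \<Rightarrow> bool" and W :: "'a \<Rightarrow> 'v list"
  assumes "strict_poset X P"
    and "dually_CPT X P"
    and "strong_module X P M"
    and "card M \<ge> 2"
    and "CPT_rep X P V E W"
    and "one_sided V E W M"
    and "connected_on M (comparable P)"
  shows "clique_module X P M"
proof -
  have MX: "M \<subseteq> X" using assms(3) unfolding strong_module_def is_module_def by simp
  have order: "\<And>x y. x \<in> M \<Longrightarrow> y \<in> M \<Longrightarrow> P x y \<longleftrightarrow> set (W x) \<subset> set (W y)"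
    using assms(5) MX unfolding CPT_rep_def by (simp add: subset_iff)
  have "finite M" using assms(4) by (metis card.infinite not_numeral_le_zero)
  then have "\<not> (\<forall>x\<in>M. \<forall>y\<in>M. x = y)" using assms(4) card_le_Suc0_iff_eq[of M] by simp
  then obtain x y where xy: "x \<in> M" "y \<in> M" "x \<noteq> y" by blast
  obtain a where "\<And>x. x \<in> M \<Longrightarrow> hd (W x) = a \<or> last (W x) = a"
    using assms(6) unfolding one_sided_def by blast
  then obtain r where r: "r \<in> M" "\<And>x. x \<in> M \<Longrightarrow> set (W r) \<subseteq> set (W x)"
    using CPT_arriving_paths_have_least[OF assms(5) MX xy(1) _ assms(7)] by metis
  obtain u v where "u \<in> M" "v \<in> M" "comparable P u v"
    using connected_on_edgeE[OF assms(7) xy] .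
  then have "\<not> connected_on M (incomparable P)"
    using least_set_disconnects_incomparable[where f = "\<lambda>x. set (W x)", OF order r] by blast
  then show ?thesis using assms(3) unfolding clique_module_def by simp
qed

end
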